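(* Let $G=(\mathcal V,\mathcal E)$ be a strongly connected digraph with $N>2$ nodes and let the weights $p_{ij}(k)$, $\alpha_i(k)$ be generated as in the Privacy-Preserving Push-Sum Algorithm described in the context. For $k\ge 1$ define the $2N\times 2N$ matrices $$\hat P(k)=\begin{bmatrix} P(k) & I_N\\ \Lambda(k) & 0\end{bmatrix},\qquad P(k)=[p_{ij}(k)]_{i,j=1}^N,\quad \Lambda(k)=\mathrm{diag}(\alpha_1(k),\dots,\alpha_N(k)),$$ and $T_k=\hat P(k)\hat P(k-1)\cdots \hat P(1)$. Then the coefficient of ergodicity $\delta(T_k)$ converges to $0$ almost surely as $k\to\infty$.
   Context: Digraph conventions: $\mathcal V=\{1,\dots,N\}$, no self-loops; $(j,i)\in\mathcal E$ means node $i$ can send messages to node $j$. $N_i^{in}=\{j:(i,j)\in\mathcal E\}$, $N_i^{out}=\{j:(j,i)\in\mathcal E\}$. Strongly connected: a directed path exists from any node to any other node. Privacy-Preserving Push-Sum Algorithm (each node $i$ has a private real initial state $x_i(0)$; $M>0$ is a fixed constant). Initialization: node $i$ draws $x^\alpha_{i,1}(0)\sim U(-M,M)$ and sets $x^\beta_{i,1}(0)=2x_i(0)-x^\alpha_{i,1}(0)$, $x^\alpha_{i,2}(0)=0$, $x^\beta_{i,2}(0)=2$. Weights: at $k=0$, node $i$ draws the numbers $\{p_{ji}(0):j\in N_i^{out}\cup\{i\}\}$ and $\alpha_i(0)$ independently from $\mathcal N(0,M)$ and normalizes them so that $\sum_{j=1}^N p_{ji}(0)+\alpha_i(0)=1$;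 at each $k\ge1$, node $i$ draws $\{p_{ji}(k):j\in N_i^{out}\cup\{i\}\}$ and $\alpha_i(k)$ independently from $U(0,1)$ and normalizes them so that $\sum_{j=1}^N p_{ji}(k)+\alpha_i(k)=1$; in all cases $p_{ji}(k)=0$ if $j\notin N_i^{out}\cup\{i\}$. State update, for $k\ge0$, $l=1,2$: node $i$ sends $p_{ji}(k)x^\alpha_{i,l}(k)$ to each $j\in N_i^{out}$ and updates $$x^\alpha_{i,l}(k+1)=\sum_{j\in N_i^{in}\cup\{i\}}p_{ij}(k)x^\alpha_{j,l}(k)+x^\beta_{i,l}(k),\qquad x^\beta_{i,l}(k+1)=\alpha_i(k)x^\alpha_{i,l}(k).$$ Node $i$'s estimated average is $\hat x^{ave}_i(k+1)=x^\alpha_{i,1}(k+1)/x^\alpha_{i,2}(k+1)$. The substate $x^\beta_{i,l}$ is never transmitted. Coefficient of ergodicity: for a column-stochastic matrix $P_c$, $\delta(P_c)=\max_j\max_{i_1,i_2}|[P_c]_{j i_1}-[P_c]_{j i_2}|$. *)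

theory Defs
  imports "HOL-Probability.Probability" "Jordan_Normal_Form.Matrix"
begin

text \<open>Nodes are 0,...,N-1.  An edge (j,i) in E means node i can send to node j.\<close>

definition out_nbrs :: "(nat \<times> nat) set \<Rightarrow> nat \<Rightarrow> nat set" where
  "out_nbrs E i = {j. (j, i) \<in> E}"

definition in_nbrs :: "(nat \<times> nat) set \<Rightarrow> nat \<Rightarrow> nat set" where
  "in_nbrs E i = {j. (i, j) \<in> E}"

definition digraph_on :: "nat \<Rightarrow> (nat \<times> nat) set \<Rightarrow> bool" where
  "digraph_on N E \<longleftrightarrow> E \<subseteq> {0..<N} \<times> {0..<N} \<and> (\<forall>i. (i, i) \<notin> E)"

definition strongly_connected :: "nat \<Rightarrow> (nat \<times> nat) set \<Rightarrow> bool" where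
  "strongly_connected N E \<longleftrightarrow> (\<forall>i<N. \<forall>j<N. i \<noteq> j \<longrightarrow> (i, j) \<in> E\<^sup>+)"

definition norm_const ::
  "(nat \<times> nat) set \<Rightarrow> (nat \<Rightarrow> nat \<Rightarrow> nat \<Rightarrow> 'a \<Rightarrow> real) \<Rightarrow> (nat \<Rightarrow> nat \<Rightarrow> 'a \<Rightarrow> real)
     \<Rightarrow> nat \<Rightarrow> nat \<Rightarrow> 'a \<Rightarrow> real" where
  "norm_const E u a k i \<omega> = (\<Sum>j\<in>out_nbrs E i \<union> {i}. u k j i \<omega>) + a k i \<omega>"

definition pw ::
  "(nat \<times> nat) set \<Rightarrow> (nat \<Rightarrow> nat \<Rightarrow> nat \<Rightarrow> 'a \<Rightarrow> real) \<Rightarrow> (nat \<Rightarrow> nat \<Rightarrow> 'a \<Rightarrow> real)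
     \<Rightarrow> nat \<Rightarrow> nat \<Rightarrow> nat \<Rightarrow> 'a \<Rightarrow> real" where
  "pw E u a k j i \<omega> = (if j \<in> out_nbrs E i \<union> {i} then u k j i \<omega> / norm_const E u a k i \<omega> else 0)"

definition alphaw ::
  "(nat \<times> nat) set \<Rightarrow> (nat \<Rightarrow> nat \<Rightarrow> nat \<Rightarrow> 'a \<Rightarrow> real) \<Rightarrow> (nat \<Rightarrow> nat \<Rightarrow> 'a \<Rightarrow> real)
     \<Rightarrow> nat \<Rightarrow> nat \<Rightarrow> 'a \<Rightarrow> real" where
  "alphaw E u a k i \<omega> = a k i \<omega> / norm_const E u a k i \<omega>"

definition Phat ::
  "nat \<Rightarrow> (nat \<times> nat) set \<Rightarrow> (nat \<Rightarrow> nat \<Rightarrow> nat \<Rightarrow> 'a \<Rightarrow> real) \<Rightarrow> (nat \<Rightarrow> nat \<Rightarrow> 'a \<Rightarrow> real)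
     \<Rightarrow> nat \<Rightarrow> 'a \<Rightarrow> real mat" where
  "Phat N E u a k \<omega> = mat (2*N) (2*N) (\<lambda>(r, c).
      if r < N \<and> c < N then pw E u a k r c \<omega>
      else if r < N \<and> N \<le> c then (if c - N = r then 1 else 0)
      else if N \<le> r \<and> c < N then (if r - N = c then alphaw E u a k c \<omega> else 0)
      else 0)"

fun Tprod ::
  "nat \<Rightarrow> (nat \<times> nat) set \<Rightarrow> (nat \<Rightarrow> nat \<Rightarrow> nat \<Rightarrow> 'a \<Rightarrow> real) \<Rightarrow> (nat \<Rightarrow> nat \<Rightarrow> 'a \<Rightarrow> real)
     \<Rightarrow> nat \<Rightarrow> 'a \<Rightarrow> real mat" where
  "Tprod N E u a 0 \<omega> = 1\<^sub>m (2*N)"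
| "Tprod N E u a (Suc k) \<omega> = Phat N E u a (Suc k) \<omega> * Tprod N E u a k \<omega>"

definition ergodicity_coeff :: "real mat \<Rightarrow> real" where
  "ergodicity_coeff P = Max {\<bar>P $$ (j, i1) - P $$ (j, i2)\<bar> | j i1 i2.
      j < dim_row P \<and> i1 < dim_col P \<and> i2 < dim_col P}"

definition draw_index :: "nat \<Rightarrow> (nat \<times> nat) set \<Rightarrow> ((nat \<times> nat \<times> nat) + (nat \<times> nat)) set" where
  "draw_index N E = Inl ` {(k, j, i). 1 \<le> k \<and> i < N \<and> j \<in> out_nbrs E i \<union> {i}}
                  \<union> Inr ` {(k, i). 1 \<le> k \<and> i < N}"

definition draws ::
  "(nat \<Rightarrow> nat \<Rightarrow> nat \<Rightarrow> 'a \<Rightarrow> real) \<Rightarrow> (nat \<Rightarrow> nat \<Rightarrow> 'a \<Rightarrow> real)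
     \<Rightarrow> ((nat \<times> nat \<times> nat) + (nat \<times> nat)) \<Rightarrow> 'a \<Rightarrow> real" where
  "draws u a = case_sum (\<lambda>(k, j, i). u k j i) (\<lambda>(k, i). a k i)"

end

theory Submission
  imports Defs
begin

text \<open>All matrices \<open>Phat(k)\<close> are column stochastic, so the \<open>\<ell>\<^sub>1\<close>-distance between two columns of
  \<open>T\<^sub>k\<close> never increases, and a column-stochastic factor whose entries are all at least \<open>e\<close>
  shrinks it by the factor \<open>1 - 2N e\<close>. If all raw draws of the steps \<open>s+1, \<dots>, s+L\<close> are at least
  \<open>1/2\<close>, every normalised weight is at least \<open>\<eta> = 1/(2(N+1))\<close>, so the product of these \<open>L\<close> factors
  has all entries at least \<open>\<eta>\<^sup>L\<close> as soon as the support graph of \<open>Phat\<close> (the edges of \<open>G\<close>,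
  self-loops, and the links between \<open>i\<close> and \<open>i+N\<close>) has walks of length exactly \<open>L\<close> between any
  two nodes; strong connectivity provides such an \<open>L\<close>. The windows \<open>(mL, mL+L]\<close> are independent
  and each is good with probability at least \<open>2^(-L(N\<^sup>2 + N))\<close>, so almost surely infinitely
  many of them are good (second Borel--Cantelli lemma), which forces \<open>\<delta>(T\<^sub>k) \<rightarrow> 0\<close>.\<close>

section \<open>Column-stochastic matrices and the ergodicity coefficient\<close>

definition col_stochastic :: "nat \<Rightarrow> real mat \<Rightarrow> bool" where
  "col_stochastic n A \<longleftrightarrow> A \<in> carrier_mat n n \<and> (\<forall>i<n. \<forall>j<n. 0 \<le> A $$ (i, j))
     \<and> (\<forall>j<n. (\<Sum>i<n. A $$ (i, j)) = 1)"

lemma index_mult_mat_sum: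
  fixes A B :: "'a::semiring_0 mat"
  assumes "A \<in> carrier_mat n m" "B \<in> carrier_mat m p" "i < n" "j < p"
  shows "(A * B) $$ (i, j) = (\<Sum>l<m. A $$ (i, l) * B $$ (l, j))"
  using assms by (auto simp: index_mult_mat scalar_prod_def lessThan_atLeast0 intro!: sum.cong)

lemma col_stochastic_one: "col_stochastic n (1\<^sub>m n)"
proof -
  have "(\<Sum>i<n. (1\<^sub>m n :: real mat) $$ (i, j)) = 1" if "j < n" for j
  proof -
    have "(\<Sum>i<n. (1\<^sub>m n :: real mat) $$ (i, j)) = (\<Sum>i<n. if i = j then 1 else 0)"
      using that by (intro sum.cong) auto
    then show ?thesis using that by simp
  qed
  then show ?thesis unfolding col_stochastic_def by auto
qed

lemma col_stochastic_mult:
  assumes "col_stochastic n A" "col_stochastic n B"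
  shows "col_stochastic n (A * B)"
proof -
  have A: "A \<in> carrier_mat n n" and B: "B \<in> carrier_mat n n"
    using assms by (auto simp: col_stochastic_def)
  have "(\<Sum>i<n. (A * B) $$ (i, j)) = 1" if "j < n" for j
  proof -
    have "(\<Sum>i<n. (A * B) $$ (i, j)) = (\<Sum>i<n. \<Sum>l<n. A $$ (i, l) * B $$ (l, j))"
      using that by (intro sum.cong) (auto simp: index_mult_mat_sum[OF A B])
    also have "\<dots> = (\<Sum>l<n. (\<Sum>i<n. A $$ (i, l)) * B $$ (l, j))"
      by (subst sum.swap) (simp add: sum_distrib_right)
    also have "\<dots> = 1" using assms that by (simp add: col_stochastic_def)
    finally show ?thesis .
  qed
  moreover have "0 \<le> (A * B) $$ (i, j)" if "i < n" "j < n" for i j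
    using assms that by (auto simp: index_mult_mat_sum[OF A B] col_stochastic_def intro!: sum_nonneg)
  ultimately show ?thesis using A B by (auto simp: col_stochastic_def)
qed

lemma col_stochastic_lower_bound_mult_le_one:
  assumes "col_stochastic n A" "\<And>r c. r < n \<Longrightarrow> c < n \<Longrightarrow> e \<le> A $$ (r, c)" "0 < n"
  shows "n * e \<le> 1"
proof -
  have "(\<Sum>r<n. e) \<le> (\<Sum>r<n. A $$ (r, 0))" using assms by (intro sum_mono) auto
  also have "\<dots> = 1" using assms by (auto simp: col_stochastic_def)
  finally show ?thesis by simp
qed

text \<open>Since \<open>z\<close> sums to zero, \<open>e\<close> may be subtracted from every entry of \<open>A\<close> without changing \<open>A z\<close>;
  the remaining matrix is nonnegative with column sums \<open>1 - n e\<close>.\<close>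

lemma sum_abs_col_stochastic_mult_le:
  assumes "col_stochastic n A" "\<And>r l. r < n \<Longrightarrow> l < n \<Longrightarrow> e \<le> A $$ (r, l)"
    and "(\<Sum>l<n. z l) = 0"
  shows "(\<Sum>r<n. \<bar>\<Sum>l<n. A $$ (r, l) * z l\<bar>) \<le> (1 - n * e) * (\<Sum>l<n. \<bar>z l\<bar>)"
proof -
  have "\<bar>\<Sum>l<n. A $$ (r, l) * z l\<bar> \<le> (\<Sum>l<n. (A $$ (r, l) - e) * \<bar>z l\<bar>)" if r: "r < n" for r
  proof -
    have "(\<Sum>l<n. A $$ (r, l) * z l) = (\<Sum>l<n. (A $$ (r, l) - e) * z l) + e * (\<Sum>l<n. z l)"
      by (simp add: algebra_simps sum.distrib sum_distrib_left sum_subtractf)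
    then have "\<bar>\<Sum>l<n. A $$ (r, l) * z l\<bar> \<le> (\<Sum>l<n. \<bar>(A $$ (r, l) - e) * z l\<bar>)"
      using assms(3) sum_abs by simp
    also have "\<dots> = (\<Sum>l<n. (A $$ (r, l) - e) * \<bar>z l\<bar>)"
      using assms(2) r by (intro sum.cong) (auto simp: abs_mult)
    finally show ?thesis .
  qed
  then have "(\<Sum>r<n. \<bar>\<Sum>l<n. A $$ (r, l) * z l\<bar>) \<le> (\<Sum>r<n. \<Sum>l<n. (A $$ (r, l) - e) * \<bar>z l\<bar>)"
    by (intro sum_mono) simp
  also have "\<dots> = (\<Sum>l<n. (\<Sum>r<n. A $$ (r, l) - e) * \<bar>z l\<bar>)"
    by (subst sum.swap) (simp add: sum_distrib_right)
  also have "\<dots> = (1 - n * e) * (\<Sum>l<n. \<bar>z l\<bar>)"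
    using assms(1) by (simp add: col_stochastic_def sum_subtractf sum_distrib_left)
  finally show ?thesis .
qed

definition col_dist :: "real mat \<Rightarrow> nat \<Rightarrow> nat \<Rightarrow> real" where
  "col_dist A i j = (\<Sum>l<dim_row A. \<bar>A $$ (l, i) - A $$ (l, j)\<bar>)"

definition col_spread :: "real mat \<Rightarrow> real" where
  "col_spread A = (\<Sum>i<dim_col A. \<Sum>j<dim_col A. col_dist A i j)"

lemma col_dist_nonneg: "0 \<le> col_dist A i j"
  unfolding col_dist_def by (intro sum_nonneg) simp

lemma col_spread_nonneg: "0 \<le> col_spread A"
  unfolding col_spread_def by (intro sum_nonneg) (simp add: col_dist_nonneg)

lemma col_dist_mult_le:
  assumes B: "col_stochastic n B" and e: "\<And>r l. r < n \<Longrightarrow> l < n \<Longrightarrow> e \<le> B $$ (r, l)"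
    and A: "col_stochastic n A" and "i < n" "j < n"
  shows "col_dist (B * A) i j \<le> (1 - n * e) * col_dist A i j"
proof -
  have cB: "B \<in> carrier_mat n n" and cA: "A \<in> carrier_mat n n"
    using A B by (auto simp: col_stochastic_def)
  have "(B * A) $$ (r, i) - (B * A) $$ (r, j) = (\<Sum>l<n. B $$ (r, l) * (A $$ (l, i) - A $$ (l, j)))"
    if "r < n" for r
    using that assms(4,5) by (simp add: index_mult_mat_sum[OF cB cA] sum_subtractf right_diff_distrib)
  then have "col_dist (B * A) i j = (\<Sum>r<n. \<bar>\<Sum>l<n. B $$ (r, l) * (A $$ (l, i) - A $$ (l, j))\<bar>)"
    using cB unfolding col_dist_def by (intro sum.cong) auto
  also have "\<dots> \<le> (1 - n * e) * (\<Sum>l<n. \<bar>A $$ (l, i) - A $$ (l, j)\<bar>)"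
    using A assms(4,5)
    by (intro sum_abs_col_stochastic_mult_le[OF B e]) (simp_all add: col_stochastic_def sum_subtractf)
  also have "\<dots> = (1 - n * e) * col_dist A i j"
    using cA by (simp add: col_dist_def)
  finally show ?thesis .
qed

lemma col_spread_mult_le:
  assumes "col_stochastic n B" "\<And>r l. r < n \<Longrightarrow> l < n \<Longrightarrow> e \<le> B $$ (r, l)" "col_stochastic n A"
  shows "col_spread (B * A) \<le> (1 - n * e) * col_spread A"
proof -
  have "A \<in> carrier_mat n n" "B \<in> carrier_mat n n"
    using assms(1,3) by (auto simp: col_stochastic_def)
  then show ?thesis
    unfolding col_spread_def using col_dist_mult_le[OF assms]
    by (auto simp: sum_distrib_left intro!: sum_mono)
qed

lemma ergodicity_coeff_bounded:
  assumes "A \<in> carrier_mat n n" "0 < n"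
    and "\<And>j i1 i2. j < n \<Longrightarrow> i1 < n \<Longrightarrow> i2 < n \<Longrightarrow> \<bar>A $$ (j, i1) - A $$ (j, i2)\<bar> \<le> b"
  shows "0 \<le> ergodicity_coeff A \<and> ergodicity_coeff A \<le> b"
proof -
  let ?S = "{\<bar>A $$ (j, i1) - A $$ (j, i2)\<bar> | j i1 i2.
              j < dim_row A \<and> i1 < dim_col A \<and> i2 < dim_col A}"
  have "?S \<subseteq> (\<lambda>(j, i1, i2). \<bar>A $$ (j, i1) - A $$ (j, i2)\<bar>) ` ({..<n} \<times> {..<n} \<times> {..<n})"
    using assms(1) by (auto simp: image_iff) blast
  then have fin: "finite ?S" by (rule finite_subset) simp
  have mem: "\<bar>A $$ (0, 0) - A $$ (0, 0)\<bar> \<in> ?S" using assms(1,2) by auto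
  show ?thesis
    unfolding ergodicity_coeff_def using Max_ge[OF fin mem] fin mem assms
    by (subst Max_le_iff) auto
qed

lemma ergodicity_coeff_le_col_spread:
  assumes "A \<in> carrier_mat n n" "0 < n"
  shows "0 \<le> ergodicity_coeff A \<and> ergodicity_coeff A \<le> col_spread A"
proof (rule ergodicity_coeff_bounded[OF assms])
  fix j i1 i2 assume "j < n" "i1 < n" "i2 < n"
  have "\<bar>A $$ (j, i1) - A $$ (j, i2)\<bar> \<le> col_dist A i1 i2"
    unfolding col_dist_def using assms(1) \<open>j < n\<close> by (intro member_le_sum) auto
  also have "\<dots> \<le> (\<Sum>i2'<n. col_dist A i1 i2')"
    using \<open>i2 < n\<close> by (intro member_le_sum) (auto simp: col_dist_nonneg)
  also have "\<dots> \<le> col_spread A"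
    unfolding col_spread_def carrier_matD(2)[OF assms(1)] using \<open>i1 < n\<close>
    by (intro member_le_sum[where f = "\<lambda>i. \<Sum>i2'<n. col_dist A i i2'"]) (auto intro: sum_nonneg col_dist_nonneg)
  finally show "\<bar>A $$ (j, i1) - A $$ (j, i2)\<bar> \<le> col_spread A" .
qed

section \<open>Backward products\<close>

lemma decseq_tendsto_0_if_frequently_contracting:
  fixes d :: "nat \<Rightarrow> real"
  assumes dec: "decseq d" and nonneg: "\<And>k. 0 \<le> d k" and \<rho>: "0 \<le> \<rho>" "\<rho> < 1"
    and contr: "\<And>K. \<exists>s\<ge>K. d (s + L) \<le> \<rho> * d s"
  shows "d \<longlonglongrightarrow> 0"
proof -
  obtain l where lim: "d \<longlonglongrightarrow> l" and le: "\<forall>k. l \<le> d k"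
    using decseq_convergent[OF dec, of 0] nonneg by blast
  have "l \<le> \<rho> * l + \<epsilon>" if "0 < \<epsilon>" for \<epsilon>
  proof -
    have "eventually (\<lambda>k. d k < l + \<epsilon>) sequentially"
      using lim that by (intro order_tendstoD(2)) auto
    then obtain K where K: "\<And>k. k \<ge> K \<Longrightarrow> d k < l + \<epsilon>"
      by (auto simp: eventually_sequentially)
    obtain s where "s \<ge> K" "d (s + L) \<le> \<rho> * d s" using contr by blast
    then have "l \<le> \<rho> * (l + \<epsilon>)"
      using le K[of s] \<rho>(1) mult_left_mono[of "d s" "l + \<epsilon>" \<rho>] by (metis less_imp_le order.trans)
    also have "\<rho> * \<epsilon> \<le> \<epsilon>" using \<rho> that by (simp add: mult_left_le_one_le)
    then have "\<rho> * (l + \<epsilon>) \<le> \<rho> * l + \<epsilon>" by (simp add: distrib_left)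
    finally show ?thesis .
  qed
  then have "l \<le> \<rho> * l" by (rule field_le_epsilon)
  moreover have "0 \<le> l" using LIMSEQ_le_const[OF lim] nonneg by blast
  ultimately have "l = 0" using mult_strict_right_mono[of \<rho> 1 l] \<rho>(2) by (cases "l = 0") auto
  then show ?thesis using lim by simp
qed

fun backward_prod :: "(nat \<Rightarrow> 'a::semiring_1 mat) \<Rightarrow> nat \<Rightarrow> nat \<Rightarrow> nat \<Rightarrow> 'a mat" where
  "backward_prod P n m 0 = 1\<^sub>m n"
| "backward_prod P n m (Suc t) = P (m + Suc t) * backward_prod P n m t"

lemma backward_prod_carrier:
  assumes "\<And>k. m < k \<Longrightarrow> k \<le> m + t \<Longrightarrow> P k \<in> carrier_mat n n"
  shows "backward_prod P n m t \<in> carrier_mat n n"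
  using assms by (induction t) (auto intro!: mult_carrier_mat)

lemma col_stochastic_backward_prod:
  assumes "\<And>k. m < k \<Longrightarrow> k \<le> m + t \<Longrightarrow> col_stochastic n (P k)"
  shows "col_stochastic n (backward_prod P n m t)"
  using assms by (induction t) (auto intro!: col_stochastic_mult col_stochastic_one)

lemma backward_prod_add:
  assumes carrier: "\<And>k. m < k \<Longrightarrow> P k \<in> carrier_mat n n"
  shows "backward_prod P n m (t + t') = backward_prod P n (m + t) t' * backward_prod P n m t"
proof (induction t')
  case 0
  show ?case using backward_prod_carrier[of m t P n] carrier by simp
next
  case (Suc t')
  have A: "P (m + t + Suc t') \<in> carrier_mat n n" using carrier by simp
  have B: "backward_prod P n (m + t) t' \<in> carrier_mat n n"
    by (rule backward_prod_carrier) (use carrier in simp)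
  have C: "backward_prod P n m t \<in> carrier_mat n n"
    by (rule backward_prod_carrier) (use carrier in simp)
  have "backward_prod P n m (t + Suc t') = P (m + t + Suc t') * (backward_prod P n (m + t) t' * backward_prod P n m t)"
    using Suc by (simp add: add.assoc)
  also have "\<dots> = backward_prod P n (m + t) (Suc t') * backward_prod P n m t"
    using assoc_mult_mat[OF A B C] by simp
  finally show ?case .
qed

theorem ergodicity_coeff_backward_prod_tendsto_0:
  assumes stoch: "\<And>k. 0 < k \<Longrightarrow> col_stochastic n (P k)" and n: "0 < n" and e: "0 < e"
    and windows: "\<And>K. \<exists>s\<ge>K. \<forall>r<n. \<forall>c<n. e \<le> backward_prod P n s L $$ (r, c)"
  shows "(\<lambda>k. ergodicity_coeff (backward_prod P n 0 k)) \<longlonglongrightarrow> 0"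
proof -
  let ?T = "backward_prod P n 0"
  have window_stoch: "col_stochastic n (backward_prod P n s t)" for s t
    by (rule col_stochastic_backward_prod) (use stoch in simp)
  have dec: "decseq (\<lambda>k. col_spread (?T k))"
  proof (rule decseq_SucI)
    fix k
    have "col_spread (P (Suc k) * ?T k) \<le> (1 - real n * 0) * col_spread (?T k)"
      using stoch[of "Suc k"] by (intro col_spread_mult_le window_stoch) (auto simp: col_stochastic_def)
    then show "col_spread (?T (Suc k)) \<le> col_spread (?T k)" by simp
  qed
  obtain s0 where "\<forall>r<n. \<forall>c<n. e \<le> backward_prod P n s0 L $$ (r, c)" using windows by blast
  then have "n * e \<le> 1" using col_stochastic_lower_bound_mult_le_one[OF window_stoch _ n] by blast
  then have \<rho>: "0 \<le> 1 - n * e" "1 - n * e < 1" using n e by auto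
  have contraction: "\<exists>s\<ge>K. col_spread (?T (s + L)) \<le> (1 - n * e) * col_spread (?T s)" for K
  proof -
    obtain s where "s \<ge> K" and s: "\<forall>r<n. \<forall>c<n. e \<le> backward_prod P n s L $$ (r, c)"
      using windows by blast
    have "?T (s + L) = backward_prod P n s L * ?T s"
      using backward_prod_add[of 0 P n s L] stoch by (simp add: col_stochastic_def)
    then have "col_spread (?T (s + L)) \<le> (1 - n * e) * col_spread (?T s)"
      using s by (simp add: col_spread_mult_le window_stoch)
    with \<open>s \<ge> K\<close> show ?thesis by blast
  qed
  have "(\<lambda>k. col_spread (?T k)) \<longlonglongrightarrow> 0"
    by (rule decseq_tendsto_0_if_frequently_contracting[OF dec col_spread_nonneg \<rho> contraction])
  moreover have "0 \<le> ergodicity_coeff (?T k) \<and> ergodicity_coeff (?T k) \<le> col_spread (?T k)" for k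
    using window_stoch[of 0 k] n by (intro ergodicity_coeff_le_col_spread) (auto simp: col_stochastic_def)
  ultimately show ?thesis
    by (auto intro: real_tendsto_sandwich[where f = "\<lambda>_. 0" and h = "\<lambda>k. col_spread (?T k)"])
qed

section \<open>The augmented weight matrices\<close>

definition draws_in_unit_interval ::
  "nat \<Rightarrow> (nat \<times> nat) set \<Rightarrow> (nat \<Rightarrow> nat \<Rightarrow> nat \<Rightarrow> 'a \<Rightarrow> real) \<Rightarrow> (nat \<Rightarrow> nat \<Rightarrow> 'a \<Rightarrow> real)
     \<Rightarrow> nat \<Rightarrow> 'a \<Rightarrow> bool" where
  "draws_in_unit_interval N E u a k \<omega> \<longleftrightarrow>
     (\<forall>i<N. (\<forall>j\<in>out_nbrs E i \<union> {i}. 0 < u k j i \<omega> \<and> u k j i \<omega> < 1) \<and> 0 < a k i \<omega> \<and> a k i \<omega> < 1)"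

definition draws_ge_half ::
  "nat \<Rightarrow> (nat \<times> nat) set \<Rightarrow> (nat \<Rightarrow> nat \<Rightarrow> nat \<Rightarrow> 'a \<Rightarrow> real) \<Rightarrow> (nat \<Rightarrow> nat \<Rightarrow> 'a \<Rightarrow> real)
     \<Rightarrow> nat \<Rightarrow> 'a \<Rightarrow> bool" where
  "draws_ge_half N E u a k \<omega> \<longleftrightarrow> (\<forall>i<N. (\<forall>j\<in>out_nbrs E i \<union> {i}. 1/2 \<le> u k j i \<omega>) \<and> 1/2 \<le> a k i \<omega>)"

lemma out_nbrs_insert_subset:
  assumes "digraph_on N E" "i < N"
  shows "out_nbrs E i \<union> {i} \<subseteq> {..<N}"
  using assms by (auto simp: digraph_on_def out_nbrs_def)

lemma norm_const_pos:
  assumes "draws_in_unit_interval N E u a k \<omega>" "i < N"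
  shows "0 < norm_const E u a k i \<omega>"
proof -
  have "0 \<le> (\<Sum>j\<in>out_nbrs E i \<union> {i}. u k j i \<omega>)"
    using assms by (intro sum_nonneg) (auto simp: draws_in_unit_interval_def less_imp_le)
  moreover have "0 < a k i \<omega>" using assms by (auto simp: draws_in_unit_interval_def)
  ultimately show ?thesis unfolding norm_const_def by simp
qed

lemma norm_const_le:
  assumes "draws_in_unit_interval N E u a k \<omega>" "digraph_on N E" "i < N"
  shows "norm_const E u a k i \<omega> \<le> real N + 1"
proof -
  have sub: "out_nbrs E i \<union> {i} \<subseteq> {..<N}" by (rule out_nbrs_insert_subset[OF assms(2,3)])
  have "(\<Sum>j\<in>out_nbrs E i \<union> {i}. u k j i \<omega>) \<le> (\<Sum>j\<in>out_nbrs E i \<union> {i}. 1)"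
    using assms(1,3) by (intro sum_mono) (auto simp: draws_in_unit_interval_def less_imp_le)
  also have "\<dots> \<le> N" using card_mono[OF _ sub] by simp
  finally show ?thesis
    using assms(1,3) by (auto simp: norm_const_def draws_in_unit_interval_def)
qed

lemma index_Phat:
  assumes "r < 2*N" "c < 2*N"
  shows "Phat N E u a k \<omega> $$ (r, c) =
    (if r < N \<and> c < N then pw E u a k r c \<omega>
     else if r < N \<and> N \<le> c then (if c - N = r then 1 else 0)
     else if N \<le> r \<and> c < N then (if r - N = c then alphaw E u a k c \<omega> else 0)
     else 0)"
  using assms unfolding Phat_def by (subst index_mat) auto

lemma sum_pw:
  assumes "digraph_on N E" "c < N"
  shows "(\<Sum>r<N. pw E u a k r c \<omega>) = (\<Sum>j\<in>out_nbrs E c \<union> {c}. u k j c \<omega>) / norm_const E u a k c \<omega>"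
proof -
  have "(\<Sum>r<N. pw E u a k r c \<omega>) = (\<Sum>r\<in>out_nbrs E c \<union> {c}. pw E u a k r c \<omega>)"
    by (rule sum.mono_neutral_right) (use out_nbrs_insert_subset[OF assms] in \<open>auto simp: pw_def\<close>)
  then show ?thesis by (simp add: pw_def sum_divide_distrib)
qed

lemma col_stochastic_Phat:
  assumes draws: "draws_in_unit_interval N E u a k \<omega>" and dg: "digraph_on N E"
  shows "col_stochastic (2*N) (Phat N E u a k \<omega>)"
proof -
  let ?P = "Phat N E u a k \<omega>"
  have split: "(\<Sum>r<2*N. f r) = (\<Sum>r<N. f r) + (\<Sum>r\<in>{N..<2*N}. f r)" for f :: "nat \<Rightarrow> real"
    by (subst sum.union_disjoint[symmetric]) (auto intro: sum.cong)
  have "0 \<le> ?P $$ (r, c)" if "r < 2*N" "c < 2*N" for r c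
    using that norm_const_pos[OF draws, of c] draws
    by (auto simp: index_Phat pw_def alphaw_def draws_in_unit_interval_def less_imp_le)
  moreover have "(\<Sum>r<2*N. ?P $$ (r, c)) = 1" if c: "c < 2*N" for c
  proof (cases "c < N")
    case True
    have "(\<Sum>r<N. ?P $$ (r, c)) = (\<Sum>j\<in>out_nbrs E c \<union> {c}. u k j c \<omega>) / norm_const E u a k c \<omega>"
      using True sum_pw[OF dg True] by (simp add: index_Phat)
    moreover have "(\<Sum>r\<in>{N..<2*N}. ?P $$ (r, c)) = (\<Sum>r\<in>{N..<2*N}. if r = c + N then alphaw E u a k c \<omega> else 0)"
      using True by (intro sum.cong) (auto simp: index_Phat)
    moreover have "\<dots> = a k c \<omega> / norm_const E u a k c \<omega>"
      using True by (simp add: alphaw_def)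
    ultimately show ?thesis
      using norm_const_pos[OF draws True] unfolding split
      by (simp add: norm_const_def add_divide_distrib[symmetric])
  next
    case False
    have "(\<Sum>r<N. ?P $$ (r, c)) = (\<Sum>r<N. if r = c - N then 1 else 0)"
      using False c by (intro sum.cong) (auto simp: index_Phat)
    moreover have "(\<Sum>r\<in>{N..<2*N}. ?P $$ (r, c)) = 0"
      using False c by (intro sum.neutral) (auto simp: index_Phat)
    ultimately show ?thesis
      using False c by (simp add: split)
  qed
  ultimately show ?thesis by (simp add: col_stochastic_def Phat_def)
qed

lemma half_le_divide_bound:
  fixes x d D :: real
  assumes "1/2 \<le> x" "0 < d" "d \<le> D"
  shows "1 / (2 * D) \<le> x / d"
proof -
  have "1 / (2 * D) = (1/2) / D" by simp
  also have "\<dots> \<le> x / D" using assms by (intro divide_right_mono) auto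
  also have "\<dots> \<le> x / d" using assms by (intro divide_left_mono) auto
  finally show ?thesis .
qed

text \<open>The positions at which \<open>Phat(k)\<close> is bounded below once the draws of step \<open>k\<close> are large:
  the support of \<open>P(k)\<close> including its diagonal, the block \<open>I\<^sub>N\<close>, and the diagonal of \<open>\<Lambda>(k)\<close>.\<close>

definition augmented_edge :: "nat \<Rightarrow> (nat \<times> nat) set \<Rightarrow> nat \<Rightarrow> nat \<Rightarrow> bool" where
  "augmented_edge N E r c \<longleftrightarrow> (r < N \<and> c < N \<and> r \<in> out_nbrs E c \<union> {c}) \<or> (r < N \<and> c = r + N)
      \<or> (N \<le> r \<and> r < 2*N \<and> c = r - N)"

lemma Phat_lower_bound:
  assumes "draws_in_unit_interval N E u a k \<omega>" "draws_ge_half N E u a k \<omega>" "digraph_on N E"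
    and "r < 2*N" "c < 2*N" "augmented_edge N E r c"
  shows "1 / (2 * (real N + 1)) \<le> Phat N E u a k \<omega> $$ (r, c)"
proof -
  have weight: "1 / (2 * (real N + 1)) \<le> x / norm_const E u a k c \<omega>" if "1/2 \<le> x" "c < N" for x
    by (rule half_le_divide_bound[OF that(1) norm_const_pos[OF assms(1) that(2)]
          norm_const_le[OF assms(1,3) that(2)]])
  consider "r < N" "c < N" "r \<in> out_nbrs E c \<union> {c}" | "r < N" "c = r + N" | "N \<le> r" "c = r - N"
    using assms(6) unfolding augmented_edge_def by blast
  then show ?thesis
  proof cases
    case 1
    then have "1/2 \<le> u k r c \<omega>" using assms(2) by (auto simp: draws_ge_half_def)
    then show ?thesis using weight 1 assms(4,5) by (simp add: index_Phat pw_def)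
  next
    case 2
    then show ?thesis using assms(4,5) by (simp add: index_Phat field_simps)
  next
    case 3
    then have "1/2 \<le> a k c \<omega>" using assms(2,4) by (auto simp: draws_ge_half_def)
    then show ?thesis using weight 3 assms(4,5) by (simp add: index_Phat alphaw_def)
  qed
qed

inductive augmented_walk :: "nat \<Rightarrow> (nat \<times> nat) set \<Rightarrow> nat \<Rightarrow> nat \<Rightarrow> nat \<Rightarrow> bool" for N E where
  walk_nil: "c < 2*N \<Longrightarrow> augmented_walk N E 0 c c"
| walk_snoc: "augmented_walk N E t c l \<Longrightarrow> r < 2*N \<Longrightarrow> augmented_edge N E r l \<Longrightarrow> augmented_walk N E (Suc t) c r"

lemma augmented_walk_bounded: "augmented_walk N E t c r \<Longrightarrow> r < 2*N \<and> c < 2*N"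
  by (induction rule: augmented_walk.induct) auto

lemma backward_prod_Phat_lower_bound:
  assumes "augmented_walk N E t c r" "digraph_on N E"
    and "\<And>k. s < k \<Longrightarrow> k \<le> s + t \<Longrightarrow> draws_in_unit_interval N E u a k \<omega> \<and> draws_ge_half N E u a k \<omega>"
  shows "(1 / (2 * (real N + 1))) ^ t \<le> backward_prod (\<lambda>k. Phat N E u a k \<omega>) (2*N) s t $$ (r, c)"
  using assms(1,3)
proof (induction rule: augmented_walk.induct)
  case (walk_nil c)
  then show ?case by simp
next
  case (walk_snoc t c l r)
  let ?P = "\<lambda>k. Phat N E u a k \<omega>" and ?\<eta> = "1 / (2 * (real N + 1))"
  let ?A = "?P (s + Suc t)" and ?B = "backward_prod ?P (2*N) s t"
  have lc: "l < 2*N" "c < 2*N" using augmented_walk_bounded[OF walk_snoc(1)] by auto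
  have A: "col_stochastic (2*N) ?A" using walk_snoc.prems assms(2) by (simp add: col_stochastic_Phat)
  have B: "col_stochastic (2*N) ?B"
    using walk_snoc.prems assms(2) by (intro col_stochastic_backward_prod) (simp add: col_stochastic_Phat)
  have "?\<eta> ^ Suc t \<le> ?A $$ (r, l) * ?B $$ (l, c)"
    unfolding power_Suc
  proof (rule mult_mono)
    show "?\<eta> \<le> ?A $$ (r, l)"
      using walk_snoc lc assms(2) by (intro Phat_lower_bound) auto
    show "?\<eta> ^ t \<le> ?B $$ (l, c)" using walk_snoc.IH walk_snoc.prems by simp
  qed (use A walk_snoc.hyps(2) lc in \<open>auto simp: col_stochastic_def\<close>)
  also have "\<dots> \<le> (\<Sum>l'<2*N. ?A $$ (r, l') * ?B $$ (l', c))"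
    using A B walk_snoc.hyps(2) lc
    by (intro member_le_sum[where f = "\<lambda>l'. ?A $$ (r, l') * ?B $$ (l', c)"]) (auto simp: col_stochastic_def)
  also have "\<dots> = (?A * ?B) $$ (r, c)"
    by (rule index_mult_mat_sum[symmetric]) (use A B walk_snoc.hyps(2) lc in \<open>auto simp: col_stochastic_def\<close>)
  also have "\<dots> = backward_prod ?P (2*N) s (Suc t) $$ (r, c)" by simp
  finally show ?case .
qed

lemma augmented_walk_stay:
  assumes "augmented_walk N E t c f" "f < N"
  shows "augmented_walk N E (t + d) c f"
proof (induction d)
  case (Suc d)
  have "augmented_edge N E f f" using assms(2) by (simp add: augmented_edge_def)
  then show ?case using walk_snoc[OF Suc] assms(2) by simp
qed (use assms(1) in simp)

lemma augmented_walk_trancl: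
  assumes "digraph_on N E" "(r, f) \<in> E\<^sup>+" "augmented_walk N E t c f"
  shows "\<exists>t'. augmented_walk N E t' c r"
  using assms(2,3)
proof (induction arbitrary: t rule: converse_trancl_induct)
  case (base r)
  have "r < N" "augmented_edge N E r f"
    using base(1) assms(1) by (auto simp: digraph_on_def augmented_edge_def out_nbrs_def)
  then show ?case by (intro exI[of _ "Suc t"] walk_snoc[OF base(2)]) auto
next
  case (step r y)
  then obtain t' where "augmented_walk N E t' c y" by blast
  moreover have "r < N" "augmented_edge N E r y"
    using step(1) assms(1) by (auto simp: digraph_on_def augmented_edge_def out_nbrs_def)
  ultimately show ?case by (intro exI[of _ "Suc t'"] walk_snoc) auto
qed

lemma augmented_walk_to_original:
  assumes "digraph_on N E" "strongly_connected N E" "c < 2*N" "r < N"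
  shows "\<exists>t. augmented_walk N E t c r"
proof -
  obtain f where f: "f < N" "augmented_walk N E (if c < N then 0 else 1) c f"
  proof (cases "c < N")
    case False
    have "augmented_edge N E (c - N) c" using False assms(3) by (auto simp: augmented_edge_def)
    then show ?thesis using that[of "c - N"] walk_snoc[OF walk_nil] False assms(3) by auto
  qed (use that walk_nil assms(3) in auto)
  show ?thesis
  proof (cases "f = r")
    case False
    then have "(r, f) \<in> E\<^sup>+" using assms(2,4) f(1) by (simp add: strongly_connected_def)
    then show ?thesis using augmented_walk_trancl[OF assms(1) _ f(2)] by blast
  qed (use f in blast)
qed

text \<open>Self-loops at the original nodes let every walk be padded to a common length.\<close>

lemma augmented_walk_uniform_length:
  assumes "digraph_on N E" "strongly_connected N E"
  shows "\<exists>L>0. \<forall>c<2*N. \<forall>r<2*N. augmented_walk N E L c r"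
proof -
  have "\<forall>p\<in>{..<2*N} \<times> {..<N}. \<exists>t. augmented_walk N E t (fst p) (snd p)"
    using augmented_walk_to_original[OF assms] by auto
  then obtain len where len: "\<And>p. p \<in> {..<2*N} \<times> {..<N} \<Longrightarrow> augmented_walk N E (len p) (fst p) (snd p)"
    by metis
  define T where "T = Max (len ` ({..<2*N} \<times> {..<N}))"
  have walk_T: "augmented_walk N E T c f" if "c < 2*N" "f < N" for c f
  proof -
    have "len (c, f) \<le> T" unfolding T_def using that by (intro Max_ge) auto
    moreover have "augmented_walk N E (len (c, f)) c f" using len[of "(c, f)"] that by simp
    ultimately show ?thesis using augmented_walk_stay[of N E "len (c, f)" c f "T - len (c, f)"] that by simp
  qed
  have "augmented_walk N E (Suc T) c r" if "c < 2*N" "r < 2*N" for c r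
  proof (cases "r < N")
    case True
    then show ?thesis using augmented_walk_stay[OF walk_T[OF that(1) True] True, of 1] by simp
  next
    case False
    have "augmented_edge N E r (r - N)" using False that(2) by (simp add: augmented_edge_def)
    then show ?thesis using walk_snoc[OF walk_T[of c "r - N"]] False that by simp
  qed
  then show ?thesis by blast
qed

lemma ergodicity_coeff_Tprod_tendsto_0:
  assumes dg: "digraph_on N E" and N: "0 < N"
    and walks: "\<forall>c<2*N. \<forall>r<2*N. augmented_walk N E L c r"
    and pos: "\<forall>k>0. draws_in_unit_interval N E u a k \<omega>"
    and good: "\<forall>K. \<exists>s\<ge>K. \<forall>k. s < k \<and> k \<le> s + L \<longrightarrow> draws_ge_half N E u a k \<omega>"
  shows "(\<lambda>k. ergodicity_coeff (Tprod N E u a k \<omega>)) \<longlonglongrightarrow> 0"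
proof -
  let ?P = "\<lambda>k. Phat N E u a k \<omega>"
  have "Tprod N E u a k \<omega> = backward_prod ?P (2*N) 0 k" for k by (induction k) auto
  moreover have "(\<lambda>k. ergodicity_coeff (backward_prod ?P (2*N) 0 k)) \<longlonglongrightarrow> 0"
  proof (rule ergodicity_coeff_backward_prod_tendsto_0)
    show "col_stochastic (2*N) (?P k)" if "0 < k" for k
      using pos that dg by (simp add: col_stochastic_Phat)
    show "\<exists>s\<ge>K. \<forall>r<2*N. \<forall>c<2*N. (1 / (2 * (real N + 1))) ^ L \<le> backward_prod ?P (2*N) s L $$ (r, c)" for K
    proof -
      obtain s where "s \<ge> K" and s: "\<forall>k. s < k \<and> k \<le> s + L \<longrightarrow> draws_ge_half N E u a k \<omega>"
        using good by blast
      have "(1 / (2 * (real N + 1))) ^ L \<le> backward_prod ?P (2*N) s L $$ (r, c)"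
        if "r < 2*N" "c < 2*N" for r c
        using walks that s pos by (intro backward_prod_Phat_lower_bound[OF _ dg]) auto
      with \<open>s \<ge> K\<close> show ?thesis by blast
    qed
  qed (use N in auto)
  ultimately show ?thesis by simp
qed

section \<open>Independent random draws\<close>

lemma (in prob_space) prob_preimage_uniform_unit:
  fixes X :: "'a \<Rightarrow> real"
  assumes "X \<in> borel_measurable M" "distr M lborel X = uniform_measure lborel {0<..<1}"
    and "S \<in> sets borel"
  shows "prob (X -` S \<inter> space M) = measure lborel ({0<..<1::real} \<inter> S)"
proof -
  have "prob (X -` S \<inter> space M) = measure (distr M lborel X) S"
    by (rule measure_distr[symmetric]) (use assms in auto)
  also have "\<dots> = measure lborel ({0<..<1::real} \<inter> S) / measure lborel {0<..<1::real}"
    unfolding assms(2) by (rule measure_uniform_measure) (use assms(3) in auto)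
  also have "measure lborel {0<..<1::real} = 1" by (simp add: measure_def)
  finally show ?thesis by simp
qed

lemma (in prob_space) AE_all_in_unit_interval:
  fixes X :: "'i \<Rightarrow> 'a \<Rightarrow> real"
  assumes "countable I" "\<And>x. x \<in> I \<Longrightarrow> X x \<in> borel_measurable M"
    and "\<And>x. x \<in> I \<Longrightarrow> distr M lborel (X x) = uniform_measure lborel {0<..<1}"
  shows "AE \<omega> in M. \<forall>x\<in>I. 0 < X x \<omega> \<and> X x \<omega> < 1"
  unfolding AE_ball_countable[OF assms(1)]
proof
  fix x assume x: "x \<in> I"
  have "prob (X x -` {0<..<1} \<inter> space M) = 1"
    using prob_preimage_uniform_unit[OF assms(2,3)[OF x], of "{0<..<1}"] by simp
  then have "AE \<omega> in M. \<omega> \<in> X x -` {0<..<1} \<inter> space M" by (rule AE_prob_1)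
  then show "AE \<omega> in M. 0 < X x \<omega> \<and> X x \<omega> < 1" by (rule eventually_mono) auto
qed

lemma (in prob_space) indep_events_exists_notin_blocks:
  assumes X: "indep_vars M' X I" and B: "disjoint_family B" "\<And>m. B m \<subseteq> I" "\<And>m. finite (B m)"
    and S: "\<And>x. x \<in> I \<Longrightarrow> S x \<in> sets (M' x)"
  shows "indep_events (\<lambda>m. {\<omega>\<in>space M. \<exists>x\<in>B m. X x \<omega> \<notin> S x}) UNIV"
proof -
  have "indep_vars (\<lambda>m. Pi\<^sub>M (B m) M') (\<lambda>m \<omega>. restrict (\<lambda>x. X x \<omega>) (B m)) UNIV"
    using B by (intro indep_vars_restrict[OF X]) auto
  moreover have "{f \<in> space (Pi\<^sub>M (B m) M'). \<exists>x\<in>B m. f x \<notin> S x} \<in> sets (Pi\<^sub>M (B m) M')" for m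
  proof -
    have "{f \<in> space (Pi\<^sub>M (B m) M'). \<exists>x\<in>B m. f x \<notin> S x} = space (Pi\<^sub>M (B m) M') - (\<Pi>\<^sub>E x\<in>B m. S x)"
      by (auto simp: space_PiM PiE_iff extensional_def)
    also have "\<dots> \<in> sets (Pi\<^sub>M (B m) M')"
      using B S by (intro sets.compl_sets sets_PiM_I_finite) auto
    finally show ?thesis .
  qed
  ultimately have "indep_events (\<lambda>m. {\<omega>\<in>space M. \<exists>x\<in>B m. restrict (\<lambda>x. X x \<omega>) (B m) x \<notin> S x}) UNIV"
    by (rule indep_eventsI_indep_vars)
  then show ?thesis by simp
qed

lemma (in prob_space) prob_exists_notin_indep:
  assumes X: "indep_vars M' X I" and B: "B \<subseteq> I" "finite B"
    and S: "\<And>x. x \<in> I \<Longrightarrow> S x \<in> sets (M' x)"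
  shows "prob {\<omega>\<in>space M. \<exists>x\<in>B. X x \<omega> \<notin> S x} = 1 - (\<Prod>x\<in>B. prob (X x -` S x \<inter> space M))"
proof (cases "B = {}")
  case False
  have ev: "(\<Inter>x\<in>B. X x -` S x \<inter> space M) \<in> events"
    using X B S False by (intro sets.finite_INT) (auto simp: indep_vars_def intro!: measurable_sets)
  have "{\<omega>\<in>space M. \<exists>x\<in>B. X x \<omega> \<notin> S x} = space M - (\<Inter>x\<in>B. X x -` S x \<inter> space M)"
    using False by auto
  then have "prob {\<omega>\<in>space M. \<exists>x\<in>B. X x \<omega> \<notin> S x} = 1 - prob (\<Inter>x\<in>B. X x -` S x \<inter> space M)"
    using prob_compl[OF ev] by simp
  also have "prob (\<Inter>x\<in>B. X x -` S x \<inter> space M) = (\<Prod>x\<in>B. prob (X x -` S x \<inter> space M))"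
    by (rule indep_varsD[OF X False B(2,1)]) (use S B in auto)
  finally show ?thesis .
qed simp

lemma (in prob_space) AE_frequently_not_in_indep_events:
  fixes A :: "nat \<Rightarrow> 'a set"
  assumes indep: "indep_events A UNIV" and q: "0 < q" and prob_le: "\<And>m. prob (A m) \<le> 1 - q"
  shows "AE \<omega> in M. \<forall>m0. \<exists>m\<ge>m0. \<omega> \<notin> A m"
  unfolding AE_all_countable
proof
  fix m0 :: nat
  have ev: "A m \<in> events" for m using indep by (auto simp: indep_events_def)
  have prod: "prob (\<Inter>m\<in>J. A m) = (\<Prod>m\<in>J. prob (A m))" if "J \<noteq> {}" "finite J" for J
    using indep that by (simp add: indep_events_def)
  have "q \<le> 1" using prob_le[of 0] measure_nonneg[of M "A 0"] by linarith
  define C where "C = (\<Inter>m\<in>{m0..}. A m)"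
  have C_ev: "C \<in> events" unfolding C_def using ev by (intro sets.countable_INT') auto
  have "prob C \<le> (1 - q) ^ Suc n" for n
  proof -
    have "prob C \<le> prob (\<Inter>m\<in>{m0..m0 + n}. A m)"
      unfolding C_def by (rule finite_measure_mono) (auto intro: sets.finite_INT ev)
    also have "\<dots> = (\<Prod>m\<in>{m0..m0 + n}. prob (A m))" by (rule prod) auto
    also have "\<dots> \<le> (\<Prod>m\<in>{m0..m0 + n}. 1 - q)"
      using prob_le by (intro prod_mono) auto
    finally show ?thesis by simp
  qed
  moreover have "(\<lambda>n. (1 - q) ^ Suc n) \<longlonglongrightarrow> 0"
    using q \<open>q \<le> 1\<close> by (intro LIMSEQ_Suc LIMSEQ_power_zero) auto
  ultimately have "prob C \<le> 0"
    by (intro LIMSEQ_le_const[where X = "\<lambda>n. (1 - q) ^ Suc n"]) auto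
  then have "C \<in> null_sets M"
    using C_ev measure_nonneg[of M C] by (simp add: null_sets_def emeasure_eq_measure)
  then show "AE \<omega> in M. \<exists>m\<ge>m0. \<omega> \<notin> A m"
    by (rule AE_I') (auto simp: C_def)
qed

section \<open>Windows of large draws\<close>

definition draw_step :: "(nat \<times> nat \<times> nat) + (nat \<times> nat) \<Rightarrow> nat" where
  "draw_step = case_sum (\<lambda>(k, j, i). k) (\<lambda>(k, i). k)"

definition draw_window :: "nat \<Rightarrow> (nat \<times> nat) set \<Rightarrow> nat \<Rightarrow> nat \<Rightarrow> ((nat \<times> nat \<times> nat) + (nat \<times> nat)) set" where
  "draw_window N E L m = {x \<in> draw_index N E. m * L < draw_step x \<and> draw_step x \<le> m * L + L}"

lemma draw_window_subset:
  assumes "digraph_on N E"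
  shows "draw_window N E L m \<subseteq>
    Inl ` ({m*L<..m*L+L} \<times> {..<N} \<times> {..<N}) \<union> Inr ` ({m*L<..m*L+L} \<times> {..<N})"
proof
  fix x assume "x \<in> draw_window N E L m"
  then consider k j i where "x = Inl (k, j, i)" "i < N" "j \<in> out_nbrs E i \<union> {i}" "m*L < k" "k \<le> m*L+L"
    | k i where "x = Inr (k, i)" "i < N" "m*L < k" "k \<le> m*L+L"
    by (auto simp: draw_window_def draw_index_def draw_step_def)
  then show "x \<in> Inl ` ({m*L<..m*L+L} \<times> {..<N} \<times> {..<N}) \<union> Inr ` ({m*L<..m*L+L} \<times> {..<N})"
  proof cases
    case (1 k j i)
    then have "j < N" using out_nbrs_insert_subset[OF assms \<open>i < N\<close>] by blast
    with 1 show ?thesis by auto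
  qed auto
qed

lemma finite_draw_window:
  assumes "digraph_on N E"
  shows "finite (draw_window N E L m)"
  by (rule finite_subset[OF draw_window_subset[OF assms]]) auto

lemma card_draw_window_le:
  assumes "digraph_on N E"
  shows "card (draw_window N E L m) \<le> L * (N * N) + L * N"
proof -
  let ?A = "{m*L<..m*L+L} \<times> {..<N} \<times> {..<N}" and ?B = "{m*L<..m*L+L} \<times> {..<N}"
  have "card (draw_window N E L m) \<le> card (Inl ` ?A \<union> Inr ` ?B :: ((nat \<times> nat \<times> nat) + (nat \<times> nat)) set)"
    by (rule card_mono[OF _ draw_window_subset[OF assms]]) auto
  also have "\<dots> \<le> card ?A + card ?B"
    by (rule order.trans[OF card_Un_le add_mono[OF card_image_le card_image_le]]) auto
  also have "\<dots> = L * (N * N) + L * N" by (simp add: card_cartesian_product)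
  finally show ?thesis .
qed

lemma disjoint_family_draw_window: "disjoint_family (draw_window N E L)"
proof -
  have "x \<notin> draw_window N E L m'" if "x \<in> draw_window N E L m" "m < m'" for x m m'
  proof -
    have "m * L + L \<le> m' * L" using mult_le_mono1[of "Suc m" m' L] that(2) by simp
    then show ?thesis using that(1) by (auto simp: draw_window_def)
  qed
  then show ?thesis
    unfolding disjoint_family_on_def by (metis disjoint_iff linorder_neqE_nat)
qed

lemma Inl_in_draw_index: "0 < k \<Longrightarrow> i < N \<Longrightarrow> j \<in> out_nbrs E i \<union> {i} \<Longrightarrow> Inl (k, j, i) \<in> draw_index N E"
  unfolding draw_index_def by (intro UnI1 imageI) simp

lemma Inr_in_draw_index: "0 < k \<Longrightarrow> i < N \<Longrightarrow> Inr (k, i) \<in> draw_index N E"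
  unfolding draw_index_def by (intro UnI2 imageI) simp

lemma ball_draw_indexD:
  assumes "\<forall>x\<in>draw_index N E. P (draws u a x)" "0 < k" "i < N"
  shows "j \<in> out_nbrs E i \<union> {i} \<Longrightarrow> P (u k j i)" and "P (a k i)"
  using bspec[OF assms(1) Inl_in_draw_index[OF assms(2,3)]] bspec[OF assms(1) Inr_in_draw_index[OF assms(2,3)]]
  by (simp_all add: draws_def)

lemma ball_draw_windowD:
  assumes "\<forall>x\<in>draw_window N E L m. P (draws u a x)" "m * L < k" "k \<le> m * L + L" "i < N"
  shows "j \<in> out_nbrs E i \<union> {i} \<Longrightarrow> P (u k j i)" and "P (a k i)"
proof -
  have "0 < k" using assms(2) by simp
  show "P (u k j i)" if "j \<in> out_nbrs E i \<union> {i}"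
    using bspec[OF assms(1), of "Inl (k, j, i)"] Inl_in_draw_index[OF \<open>0 < k\<close> assms(4) that] assms(2,3)
    by (simp add: draw_window_def draw_step_def draws_def)
  show "P (a k i)"
    using bspec[OF assms(1), of "Inr (k, i)"] Inr_in_draw_index[OF \<open>0 < k\<close> assms(4)] assms(2,3)
    by (simp add: draw_window_def draw_step_def draws_def)
qed

lemma (in prob_space) AE_draws_in_unit_interval:
  assumes indep: "indep_vars (\<lambda>_. borel) (draws u a) (draw_index N E)"
    and unif: "\<And>x. x \<in> draw_index N E \<Longrightarrow> distr M lborel (draws u a x) = uniform_measure lborel {0<..<1}"
  shows "AE \<omega> in M. \<forall>k>0. draws_in_unit_interval N E u a k \<omega>"
proof -
  have "AE \<omega> in M. \<forall>x\<in>draw_index N E. 0 < draws u a x \<omega> \<and> draws u a x \<omega> < 1"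
    using indep unif by (intro AE_all_in_unit_interval) (auto simp: indep_vars_def)
  then show ?thesis
  proof (rule eventually_mono)
    fix \<omega> assume all: "\<forall>x\<in>draw_index N E. 0 < draws u a x \<omega> \<and> draws u a x \<omega> < 1"
    show "\<forall>k>0. draws_in_unit_interval N E u a k \<omega>"
      using ball_draw_indexD[where P = "\<lambda>f. 0 < f \<omega> \<and> f \<omega> < 1", OF all]
      by (simp add: draws_in_unit_interval_def)
  qed
qed

lemma (in prob_space) AE_frequently_draws_ge_half:
  assumes "digraph_on N E" "0 < L"
    and indep: "indep_vars (\<lambda>_. borel) (draws u a) (draw_index N E)"
    and unif: "\<And>x. x \<in> draw_index N E \<Longrightarrow> distr M lborel (draws u a x) = uniform_measure lborel {0<..<1}"
  shows "AE \<omega> in M. \<forall>K. \<exists>s\<ge>K. \<forall>k. s < k \<and> k \<le> s + L \<longrightarrow> draws_ge_half N E u a k \<omega>"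
proof -
  define W where "W = draw_window N E L"
  define bad where "bad m = {\<omega>\<in>space M. \<exists>x\<in>W m. draws u a x \<omega> \<notin> {1/2..}}" for m
  have W: "W m \<subseteq> draw_index N E" "finite (W m)" for m
    using finite_draw_window[OF assms(1)] by (auto simp: W_def draw_window_def)
  have prob_bad: "prob (bad m) \<le> 1 - (1/2) ^ (L * (N * N) + L * N)" for m
  proof -
    have half: "prob (draws u a x -` {1/2..} \<inter> space M) = 1/2" if "x \<in> W m" for x
    proof -
      have "x \<in> draw_index N E" using W that by blast
      then have "prob (draws u a x -` {1/2..} \<inter> space M) = measure lborel ({0<..<1::real} \<inter> {1/2..})"
        using indep unif by (intro prob_preimage_uniform_unit) (auto simp: indep_vars_def)
      also have "{0<..<1::real} \<inter> {1/2..} = {1/2..<1}" by auto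
      also have "measure lborel {1/2..<1::real} = 1/2" using measure_lborel_Ico[of "1/2" "1::real"] by simp
      finally show ?thesis .
    qed
    have "(\<Prod>x\<in>W m. prob (draws u a x -` {1/2..} \<inter> space M)) = (\<Prod>x\<in>W m. 1/2)"
      by (rule prod.cong[OF refl half])
    then have "prob (bad m) = 1 - (1/2) ^ card (W m)"
      unfolding bad_def using prob_exists_notin_indep[OF indep, of "W m" "\<lambda>_. {1/2..}"] W by simp
    also have "\<dots> \<le> 1 - (1/2) ^ (L * (N * N) + L * N)"
      unfolding W_def by (simp add: power_decreasing card_draw_window_le[OF assms(1)])
    finally show ?thesis .
  qed
  have indep_bad: "indep_events bad UNIV"
    unfolding bad_def
    by (rule indep_events_exists_notin_blocks[OF indep]) (use W in \<open>auto simp: W_def disjoint_family_draw_window\<close>)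
  have "AE \<omega> in M. \<forall>m0. \<exists>m\<ge>m0. \<omega> \<notin> bad m"
    by (intro AE_frequently_not_in_indep_events[OF indep_bad _ prob_bad]) simp
  then show ?thesis
  proof (rule eventually_mono[OF eventually_conj[OF AE_space]], safe)
    fix \<omega> K assume \<omega>: "\<omega> \<in> space M" "\<forall>m0. \<exists>m\<ge>m0. \<omega> \<notin> bad m"
    then obtain m where "K \<le> m" "\<omega> \<notin> bad m" by blast
    then have large: "\<forall>x\<in>W m. 1/2 \<le> draws u a x \<omega>" using \<omega>(1) by (auto simp: bad_def)
    have "\<forall>k. m * L < k \<and> k \<le> m * L + L \<longrightarrow> draws_ge_half N E u a k \<omega>"
      using ball_draw_windowD[where P = "\<lambda>f. 1/2 \<le> f \<omega>", OF large[unfolded W_def]]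
      by (simp add: draws_ge_half_def)
    moreover have "K \<le> m * L" using \<open>K \<le> m\<close> assms(2) by (simp add: le_trans)
    ultimately show "\<exists>s\<ge>K. \<forall>k. s < k \<and> k \<le> s + L \<longrightarrow> draws_ge_half N E u a k \<omega>" by blast
  qed
qed

theorem lemma1:
  fixes M :: "'a measure" and N :: nat and E :: "(nat \<times> nat) set"
    and u :: "nat \<Rightarrow> nat \<Rightarrow> nat \<Rightarrow> 'a \<Rightarrow> real"
    and a :: "nat \<Rightarrow> nat \<Rightarrow> 'a \<Rightarrow> real"
  assumes "prob_space M"
    and "N > 2"
    and "digraph_on N E"
    and "strongly_connected N E"
    and "prob_space.indep_vars M (\<lambda>_. borel) (draws u a) (draw_index N E)"
    and "\<And>x. x \<in> draw_index N E \<Longrightarrow>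
           distr M lborel (draws u a x) = uniform_measure lborel {0<..<1}"
  shows "AE \<omega> in M. (\<lambda>k. ergodicity_coeff (Tprod N E u a k \<omega>)) \<longlonglongrightarrow> 0"
proof -
  interpret prob_space M by fact
  obtain L where "0 < L" and walks: "\<forall>c<2*N. \<forall>r<2*N. augmented_walk N E L c r"
    using augmented_walk_uniform_length[OF assms(3,4)] by blast
  have "AE \<omega> in M. \<forall>k>0. draws_in_unit_interval N E u a k \<omega>"
    by (rule AE_draws_in_unit_interval[OF assms(5,6)])
  moreover have "AE \<omega> in M. \<forall>K. \<exists>s\<ge>K. \<forall>k. s < k \<and> k \<le> s + L \<longrightarrow> draws_ge_half N E u a k \<omega>"
    by (rule AE_frequently_draws_ge_half[OF assms(3) \<open>0 < L\<close> assms(5,6)])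
  ultimately show ?thesis
    by eventually_elim (use ergodicity_coeff_Tprod_tendsto_0[OF assms(3) _ walks] assms(2) in simp)
qed

end
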